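(* Let $n\ge 2$, $\alpha\in(0,1)$ and $\rho\in\{\mathrm{VaR},\mathrm{ES}\}$, and let $\mathbf X=(X_1,\dots,X_n)$ be in $(L^0)^n$ when $\rho=\mathrm{VaR}$ and in $(L^1)^n$ when $\rho=\mathrm{ES}$. If $\mathbf X$ is $\alpha$-concentrated, then $\mathrm{DQ}^\rho_\alpha(\mathbf X)\le 1$. If, in addition, with $S=\sum_{i=1}^nX_i$, the map $\beta\mapsto\rho_\beta(S)$ is continuous at $\beta=\alpha$ and $\rho_\beta(S)>\rho_\alpha(S)$ for all $\beta\in(0,\alpha)$, then $\mathrm{DQ}^\rho_\alpha(\mathbf X)=1$.
   Context: Let $(\Omega,\mathcal F,\mathbb P)$ be an atomless probability space. $L^0$ is the set of all random variables and $L^1$ the set of integrable random variables; a.s. equal random variables are identified. For $\alpha\in[0,1)$ and $X\in L^0$, $\mathrm{VaR}_\alpha(X)=\inf\{x\in\mathbb R:\mathbb P(X\le x)\ge 1-\alpha\}$; in particular $\mathrm{VaR}_0(X)=\operatorname{ess\,sup}X$, possibly $+\infty$. For $\alpha\in(0,1)$ and $X\in L^1$, $\mathrm{ES}_\alpha(X)=\frac1\alpha\int_0^\alpha\mathrm{VaR}_\beta(X)\,\mathrm d\beta$, and $\mathrm{ES}_0(X)=\operatorname{ess\,sup}X$. For $\rho\in\{\mathrm{VaR},\mathrm{ES}\}$, $\alpha\in(0,1)$ and $\mathbf X=(X_1,\dots,X_n)$ (in $(L^0)^n$ when $\rho=\mathrm{VaR}$, in $(L^1)^n$ when $\rho=\mathrm{ES}$),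 the diversification quotient is $\mathrm{DQ}^\rho_\alpha(\mathbf X)=\alpha^*/\alpha$, where $\alpha^*=\inf\{\beta\in(0,1):\rho_\beta(\sum_{i=1}^nX_i)\le\sum_{i=1}^n\rho_\alpha(X_i)\}$, with the convention $\inf\emptyset=1$. A tail event of a random variable $X$ is an event $A\in\mathcal F$ with $0<\mathbb P(A)<1$ such that $X(\omega)\ge X(\omega')$ for a.s. all $\omega\in A$ and $\omega'\in A^c$. For $\alpha\in(0,1)$, a random vector $(X_1,\dots,X_n)$ is $\alpha$-concentrated if there is an event $A$ with $\mathbb P(A)=\alpha$ that is a tail event of every $X_i$, $i=1,\dots,n$. *)

theory Defs
  imports "HOL-Probability.Probability"
begin

definition atomless :: "'a measure \<Rightarrow> bool" where
  "atomless M \<longleftrightarrow> (\<forall>A\<in>sets M. measure M A > 0 \<longrightarrow>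
      (\<exists>B\<in>sets M. B \<subseteq> A \<and> 0 < measure M B \<and> measure M B < measure M A))"

definition VaR :: "'a measure \<Rightarrow> ('a \<Rightarrow> real) \<Rightarrow> real \<Rightarrow> real" where
  "VaR M X \<alpha> = Inf {x. measure M {\<omega> \<in> space M. X \<omega> \<le> x} \<ge> 1 - \<alpha>}"

definition ES :: "'a measure \<Rightarrow> ('a \<Rightarrow> real) \<Rightarrow> real \<Rightarrow> real" where
  "ES M X \<alpha> = (1 / \<alpha>) * (LINT \<beta>:{0<..<\<alpha>}|lborel. VaR M X \<beta>)"

datatype riskmeasure = VaR_rm | ES_rm

fun rho :: "riskmeasure \<Rightarrow> 'a measure \<Rightarrow> ('a \<Rightarrow> real) \<Rightarrow> real \<Rightarrow> real" where
  "rho VaR_rm M X \<beta> = VaR M X \<beta>"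
| "rho ES_rm M X \<beta> = ES M X \<beta>"

definition DQ :: "riskmeasure \<Rightarrow> 'a measure \<Rightarrow> real \<Rightarrow> nat \<Rightarrow> (nat \<Rightarrow> 'a \<Rightarrow> real) \<Rightarrow> real" where
  "DQ r M \<alpha> n X =
     (let B = {\<beta> \<in> {0<..<1}. rho r M (\<lambda>\<omega>. \<Sum>i<n. X i \<omega>) \<beta> \<le> (\<Sum>i<n. rho r M (X i) \<alpha>)};
          astar = (if B = {} then 1 else Inf B)
      in astar / \<alpha>)"

definition tail_event :: "'a measure \<Rightarrow> ('a \<Rightarrow> real) \<Rightarrow> 'a set \<Rightarrow> bool" where
  "tail_event M X A \<longleftrightarrow> A \<in> sets M \<and> 0 < measure M A \<and> measure M A < 1 \<and>
     (AE \<omega> in M. AE \<omega>' in M. \<omega> \<in> A \<and> \<omega>' \<notin> A \<longrightarrow> X \<omega> \<ge> X \<omega>')"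

definition concentrated :: "'a measure \<Rightarrow> real \<Rightarrow> nat \<Rightarrow> (nat \<Rightarrow> 'a \<Rightarrow> real) \<Rightarrow> bool" where
  "concentrated M \<alpha> n X \<longleftrightarrow>
     (\<exists>A \<in> sets M. measure M A = \<alpha> \<and> (\<forall>i<n. tail_event M (X i) A))"

end

theory Submission
  imports Defs
begin

(*
  A common tail event A of probability \<alpha> splits each X i at its quantile c i = VaR_\<alpha>(X i):
  almost surely X i \<ge> c i on A and X i \<le> c i off A.  Summing, A splits S at \<Sum> c i.
  A split at level c pins down the lower tail of the quantile function: VaR_\<alpha>(Y) \<le> c \<le> VaR_\<beta>(Y)
  for \<beta> < \<alpha>, and by a layer-cake computation \<alpha> ES_\<alpha>(Y) = E[Y; A].  Hence VaR_\<alpha>(S) \<le> \<Sum> c i,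
  with equality under left continuity, and ES_\<alpha> is additive along X.  So \<alpha> lies in the set whose
  infimum defines \<alpha>*, giving DQ \<le> 1, and strict decrease of \<beta> \<mapsto> \<rho>_\<beta>(S) at \<alpha> excludes smaller levels.
*)

context prob_space
begin

lemma cdf_distr_eq_prob:
  fixes Y :: "'a \<Rightarrow> real"
  assumes "Y \<in> borel_measurable M"
  shows "cdf (distr M borel Y) x = prob {\<omega>\<in>space M. Y \<omega> \<le> x}"
  using assms unfolding cdf_def
  by (subst measure_distr) (auto intro!: arg_cong[where f=prob])

lemma VaR_level_set:
  fixes Y :: "'a \<Rightarrow> real"
  assumes Y: "Y \<in> borel_measurable M" and "0 < \<gamma>" "\<gamma> < 1"
  shows "{x. 1 - \<gamma> \<le> prob {\<omega>\<in>space M. Y \<omega> \<le> x}} \<noteq> {}"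
    and "bdd_below {x. 1 - \<gamma> \<le> prob {\<omega>\<in>space M. Y \<omega> \<le> x}}"
proof -
  interpret D: real_distribution "distr M borel Y" using Y by simp
  have "eventually (\<lambda>x. 1 - \<gamma> < cdf (distr M borel Y) x) at_top"
    using D.cdf_lim_at_top_prob assms by (intro order_tendstoD) auto
  then obtain x where "1 - \<gamma> < cdf (distr M borel Y) x"
    by (metis eventually_happens' trivial_limit_at_top_linorder)
  then show "{x. 1 - \<gamma> \<le> prob {\<omega>\<in>space M. Y \<omega> \<le> x}} \<noteq> {}"
    using cdf_distr_eq_prob[OF Y] by (auto intro!: exI[of _ x])
  have "eventually (\<lambda>x. cdf (distr M borel Y) x < 1 - \<gamma>) at_bot"
    using D.cdf_lim_at_bot assms by (intro order_tendstoD) auto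
  then obtain b where b: "\<And>x. x \<le> b \<Longrightarrow> cdf (distr M borel Y) x < 1 - \<gamma>"
    by (auto simp: eventually_at_bot_linorder)
  show "bdd_below {x. 1 - \<gamma> \<le> prob {\<omega>\<in>space M. Y \<omega> \<le> x}}"
  proof (rule bdd_belowI[of _ b])
    fix x assume "x \<in> {x. 1 - \<gamma> \<le> prob {\<omega>\<in>space M. Y \<omega> \<le> x}}"
    then show "b \<le> x" using b[of x] cdf_distr_eq_prob[OF Y, of x] by force
  qed
qed

lemma VaR_le_iff:
  fixes Y :: "'a \<Rightarrow> real"
  assumes Y: "Y \<in> borel_measurable M" and \<gamma>: "0 < \<gamma>" "\<gamma> < 1"
  shows "VaR M Y \<gamma> \<le> x \<longleftrightarrow> 1 - \<gamma> \<le> prob {\<omega>\<in>space M. Y \<omega> \<le> x}"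
proof
  assume "1 - \<gamma> \<le> prob {\<omega>\<in>space M. Y \<omega> \<le> x}"
  then show "VaR M Y \<gamma> \<le> x"
    unfolding VaR_def by (intro cInf_lower VaR_level_set[OF Y \<gamma>]) simp
next
  interpret D: real_distribution "distr M borel Y" using Y by simp
  let ?F = "cdf (distr M borel Y)"
  define v where "v = VaR M Y \<gamma>"
  have "eventually (\<lambda>y. 1 - \<gamma> \<le> ?F y) (at_right v)"
  proof (rule eventually_at_rightI[of v "v + 1"])
    fix y assume "y \<in> {v<..<v + 1}"
    then obtain q where "1 - \<gamma> \<le> prob {\<omega>\<in>space M. Y \<omega> \<le> q}" "q < y"
      using cInf_less_iff[OF VaR_level_set[OF Y \<gamma>]] by (auto simp: v_def VaR_def)
    then show "1 - \<gamma> \<le> ?F y"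
      using D.cdf_nondecreasing[of q y] cdf_distr_eq_prob[OF Y] by force
  qed simp
  then have "1 - \<gamma> \<le> ?F v"
    using D.cdf_is_right_cont[of v] unfolding continuous_within
    by (intro tendsto_lowerbound) auto
  moreover assume "VaR M Y \<gamma> \<le> x"
  ultimately show "1 - \<gamma> \<le> prob {\<omega>\<in>space M. Y \<omega> \<le> x}"
    using D.cdf_nondecreasing[of v x] cdf_distr_eq_prob[OF Y] v_def by force
qed

lemma less_VaR_iff:
  fixes Y :: "'a \<Rightarrow> real"
  assumes Y: "Y \<in> borel_measurable M" and "0 < \<gamma>" "\<gamma> < 1"
  shows "x < VaR M Y \<gamma> \<longleftrightarrow> \<gamma> < prob {\<omega>\<in>space M. x < Y \<omega>}"
proof -
  have "space M - {\<omega>\<in>space M. x < Y \<omega>} = {\<omega>\<in>space M. Y \<omega> \<le> x}" by auto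
  then have "prob {\<omega>\<in>space M. Y \<omega> \<le> x} = 1 - prob {\<omega>\<in>space M. x < Y \<omega>}"
    using prob_compl[of "{\<omega>\<in>space M. x < Y \<omega>}"] Y by simp
  then show ?thesis using VaR_le_iff[OF assms, of x] by auto
qed

lemma VaR_antimono:
  fixes Y :: "'a \<Rightarrow> real"
  assumes Y: "Y \<in> borel_measurable M" and "0 < \<gamma>" "\<gamma> \<le> \<delta>" "\<delta> < 1"
  shows "VaR M Y \<delta> \<le> VaR M Y \<gamma>"
  using VaR_le_iff[OF Y, of \<gamma> "VaR M Y \<gamma>"] VaR_le_iff[OF Y, of \<delta> "VaR M Y \<gamma>"] assms by simp

lemma set_borel_measurable_VaR:
  fixes Y :: "'a \<Rightarrow> real"
  assumes Y: "Y \<in> borel_measurable M"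
  shows "set_borel_measurable borel {0<..<1} (VaR M Y)"
proof -
  have "mono_on {0<..<1} (\<lambda>\<gamma>. - VaR M Y \<gamma>)"
    using VaR_antimono[OF Y] by (auto simp: mono_on_def)
  then have "(\<lambda>\<gamma>. - VaR M Y \<gamma>) \<in> borel_measurable (restrict_space borel {0<..<1})"
    by (rule borel_measurable_mono_on_fnc)
  then have "(\<lambda>\<gamma>. - (- VaR M Y \<gamma>)) \<in> borel_measurable (restrict_space borel {0<..<1})"
    by measurable
  then show ?thesis
    by (simp add: set_borel_measurable_def borel_measurable_restrict_space_iff)
qed

end

definition tail_split :: "'a measure \<Rightarrow> ('a \<Rightarrow> real) \<Rightarrow> 'a set \<Rightarrow> real \<Rightarrow> bool" where
  "tail_split M Y A c \<longleftrightarrow>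
     (AE \<omega> in M. \<omega> \<in> A \<longrightarrow> c \<le> Y \<omega>) \<and> (AE \<omega> in M. \<omega> \<notin> A \<longrightarrow> Y \<omega> \<le> c)"

lemma tail_split_sum:
  fixes X :: "'i \<Rightarrow> 'a \<Rightarrow> real"
  assumes "finite I" and "\<And>i. i \<in> I \<Longrightarrow> tail_split M (X i) A (c i)"
  shows "tail_split M (\<lambda>\<omega>. \<Sum>i\<in>I. X i \<omega>) A (\<Sum>i\<in>I. c i)"
proof -
  have "AE \<omega> in M. \<forall>i\<in>I. \<omega> \<in> A \<longrightarrow> c i \<le> X i \<omega>"
    using assms by (subst AE_finite_all) (auto simp: tail_split_def)
  moreover have "AE \<omega> in M. \<forall>i\<in>I. \<omega> \<notin> A \<longrightarrow> X i \<omega> \<le> c i"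
    using assms by (subst AE_finite_all) (auto simp: tail_split_def)
  ultimately show ?thesis
    unfolding tail_split_def by (safe; elim eventually_mono) (auto intro: sum_mono)
qed

lemma AE_le_of_AE_less:
  fixes f :: "'a \<Rightarrow> real"
  assumes "\<And>x. x < c \<Longrightarrow> AE \<omega> in M. P \<omega> \<longrightarrow> x < f \<omega>"
  shows "AE \<omega> in M. P \<omega> \<longrightarrow> c \<le> f \<omega>"
proof -
  have "AE \<omega> in M. \<forall>n::nat. P \<omega> \<longrightarrow> c - 1 / Suc n < f \<omega>"
    unfolding AE_all_countable using assms by simp
  then show ?thesis
  proof eventually_elim
    case (elim \<omega>)
    show ?case
    proof (intro impI leI notI)
      assume "P \<omega>" "f \<omega> < c"
      then obtain n where "inverse (real (Suc n)) < c - f \<omega>"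
        using reals_Archimedean[of "c - f \<omega>"] by auto
      moreover have "c - 1 / Suc n < f \<omega>" using elim \<open>P \<omega>\<close> by blast
      ultimately show False by (simp add: inverse_eq_divide)
    qed
  qed
qed

context prob_space
begin

lemma tail_event_null_or_AE_le:
  fixes Y :: "'a \<Rightarrow> real"
  assumes [measurable]: "Y \<in> borel_measurable M" "A \<in> events"
    and tail: "AE \<omega> in M. AE \<omega>' in M. \<omega> \<in> A \<and> \<omega>' \<notin> A \<longrightarrow> Y \<omega>' \<le> Y \<omega>"
  shows "prob {\<omega>\<in>space M. \<omega> \<in> A \<and> Y \<omega> \<le> x} = 0 \<or> (AE \<omega>' in M. \<omega>' \<notin> A \<longrightarrow> Y \<omega>' \<le> x)"
proof (rule disjCI)
  assume not_below: "\<not> (AE \<omega>' in M. \<omega>' \<notin> A \<longrightarrow> Y \<omega>' \<le> x)"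
  have "AE \<omega> in M. \<not> (\<omega> \<in> A \<and> Y \<omega> \<le> x)"
    using tail
  proof eventually_elim
    case (elim \<omega>)
    show ?case
    proof
      assume "\<omega> \<in> A \<and> Y \<omega> \<le> x"
      with elim have "AE \<omega>' in M. \<omega>' \<notin> A \<longrightarrow> Y \<omega>' \<le> x"
        by (auto elim!: eventually_mono)
      with not_below show False ..
    qed
  qed
  then show "prob {\<omega>\<in>space M. \<omega> \<in> A \<and> Y \<omega> \<le> x} = 0"
    by (subst prob_Collect_eq_0) auto
qed

lemma prob_greater_le_of_tail_split:
  fixes Y :: "'a \<Rightarrow> real"
  assumes [measurable]: "Y \<in> borel_measurable M" "A \<in> events"
    and "tail_split M Y A c" and "c \<le> x"
  shows "prob {\<omega>\<in>space M. x < Y \<omega>} \<le> prob A"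
proof (rule finite_measure_mono_AE)
  have "AE \<omega> in M. \<omega> \<notin> A \<longrightarrow> Y \<omega> \<le> c"
    using assms(3) by (simp add: tail_split_def)
  then show "AE \<omega> in M. \<omega> \<in> {\<omega>\<in>space M. x < Y \<omega>} \<longrightarrow> \<omega> \<in> A"
    by eventually_elim (use \<open>c \<le> x\<close> in auto)
qed simp

lemma prob_le_greater_of_tail_split:
  fixes Y :: "'a \<Rightarrow> real"
  assumes [measurable]: "Y \<in> borel_measurable M" "A \<in> events"
    and "tail_split M Y A c" and "x < c"
  shows "prob A \<le> prob {\<omega>\<in>space M. x < Y \<omega>}"
proof (rule finite_measure_mono_AE)
  show "AE \<omega> in M. \<omega> \<in> A \<longrightarrow> \<omega> \<in> {\<omega>\<in>space M. x < Y \<omega>}"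
    using assms(3,4) sets.sets_into_space[OF assms(2)] unfolding tail_split_def
    by (auto elim!: eventually_mono)
qed simp

lemma VaR_le_of_tail_split:
  fixes Y :: "'a \<Rightarrow> real"
  assumes Y: "Y \<in> borel_measurable M" and A: "A \<in> events"
    and split: "tail_split M Y A c" and "0 < prob A" "prob A < 1"
  shows "VaR M Y (prob A) \<le> c"
  using less_VaR_iff[OF Y assms(4,5), of c] prob_greater_le_of_tail_split[OF Y A split, of c]
  by linarith

lemma le_VaR_of_tail_split:
  fixes Y :: "'a \<Rightarrow> real"
  assumes Y: "Y \<in> borel_measurable M" and A: "A \<in> events"
    and split: "tail_split M Y A c" and "0 < \<beta>" "\<beta> < prob A"
  shows "c \<le> VaR M Y \<beta>"
proof (rule dense_le)
  fix x assume "x < c"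
  moreover have "\<beta> < 1" using assms(5) prob_le_1[of A] by linarith
  ultimately show "x \<le> VaR M Y \<beta>"
    using less_VaR_iff[OF Y assms(4), of x] prob_le_greater_of_tail_split[OF Y A split, of x] assms(5)
    by simp
qed

lemma tail_event_tail_split:
  fixes Y :: "'a \<Rightarrow> real"
  assumes Y[measurable]: "Y \<in> borel_measurable M" and "tail_event M Y A"
  shows "tail_split M Y A (VaR M Y (prob A))"
proof -
  have A[measurable]: "A \<in> events" and pA: "0 < prob A" "prob A < 1"
    and tail: "AE \<omega> in M. AE \<omega>' in M. \<omega> \<in> A \<and> \<omega>' \<notin> A \<longrightarrow> Y \<omega>' \<le> Y \<omega>"
    using assms(2) by (auto simp: tail_event_def)
  define c where "c = VaR M Y (prob A)"
  have "AE \<omega> in M. \<omega> \<in> A \<longrightarrow> x < Y \<omega>" if "x < c" for x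
  proof -
    have "prob {\<omega>\<in>space M. Y \<omega> \<le> x} < prob (space M - A)"
      using VaR_le_iff[OF Y pA, of x] \<open>x < c\<close> prob_compl[OF A] by (simp add: c_def)
    then have "\<not> (AE \<omega>' in M. \<omega>' \<notin> A \<longrightarrow> Y \<omega>' \<le> x)"
      using finite_measure_mono_AE[of "space M - A" "{\<omega>\<in>space M. Y \<omega> \<le> x}"]
      by (auto elim!: eventually_mono)
    then have "prob {\<omega>\<in>space M. \<omega> \<in> A \<and> Y \<omega> \<le> x} = 0"
      using tail_event_null_or_AE_le[OF Y A tail, of x] by blast
    then show ?thesis
      by (subst (asm) prob_Collect_eq_0) (auto elim!: eventually_mono)
  qed
  then have above: "AE \<omega> in M. \<omega> \<in> A \<longrightarrow> c \<le> Y \<omega>"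
    by (rule AE_le_of_AE_less)
  have "AE \<omega> in M. \<omega> \<notin> A \<longrightarrow> Y \<omega> \<le> c"
    using tail_event_null_or_AE_le[OF Y A tail, of c]
  proof
    let ?U = "{\<omega>\<in>space M. c < Y \<omega>}"
    assume "prob {\<omega>\<in>space M. \<omega> \<in> A \<and> Y \<omega> \<le> c} = 0"
    then have "AE \<omega> in M. \<omega> \<in> A \<longrightarrow> \<omega> \<in> ?U \<inter> A"
      using sets.sets_into_space[OF A]
      by (subst (asm) prob_Collect_eq_0) (auto elim!: eventually_mono)
    then have "prob A \<le> prob (?U \<inter> A)"
      by (rule finite_measure_mono_AE) simp
    moreover have "prob ?U \<le> prob A"
      using less_VaR_iff[OF Y pA, of c] by (simp add: c_def)
    ultimately have "prob (?U - A) = 0"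
      using finite_measure_Diff'[of ?U A] measure_nonneg[of M "?U - A"] by simp
    moreover have "?U - A = {\<omega>\<in>space M. \<omega> \<notin> A \<and> c < Y \<omega>}" by auto
    ultimately have "prob {\<omega>\<in>space M. \<omega> \<notin> A \<and> c < Y \<omega>} = 0" by simp
    then show ?thesis
      by (subst (asm) prob_Collect_eq_0) (auto elim!: eventually_mono)
  qed
  with above show ?thesis
    unfolding tail_split_def c_def by simp
qed

end

lemma nn_integral_layer_cake:
  fixes f :: "'a \<Rightarrow> real"
  assumes "sigma_finite_measure M" and [measurable]: "f \<in> borel_measurable M"
  shows "(\<integral>\<^sup>+x. ennreal (f x) \<partial>M)
    = (\<integral>\<^sup>+t. indicator {0<..} t * emeasure M {x\<in>space M. t < f x} \<partial>lborel)"
proof -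
  interpret pair_sigma_finite M lborel
    by (intro pair_sigma_finite.intro assms(1) lborel.sigma_finite_measure_axioms)
  have "ennreal (f x) = (\<integral>\<^sup>+t. indicator {0<..<f x} t \<partial>lborel)" for x
    by (cases "0 \<le> f x") (auto simp: ennreal_neg)
  then have "(\<integral>\<^sup>+x. ennreal (f x) \<partial>M) = (\<integral>\<^sup>+x. \<integral>\<^sup>+t. indicator {0<..<f x} t \<partial>lborel \<partial>M)"
    by simp
  also have "\<dots> = (\<integral>\<^sup>+t. \<integral>\<^sup>+x. indicator {0<..<f x} t \<partial>M \<partial>lborel)"
    by (rule Fubini'[symmetric]) (unfold indicator_def greaterThanLessThan_iff, measurable)
  also have "\<dots> = (\<integral>\<^sup>+t. indicator {0<..} t * emeasure M {x\<in>space M. t < f x} \<partial>lborel)"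
  proof (intro nn_integral_cong)
    fix t :: real
    have "(\<integral>\<^sup>+x. indicator {0<..<f x} t \<partial>M)
        = (\<integral>\<^sup>+x. indicator {0<..} t * indicator {x\<in>space M. t < f x} x \<partial>M)"
      by (intro nn_integral_cong) (auto simp: indicator_def)
    then show "(\<integral>\<^sup>+x. indicator {0<..<f x} t \<partial>M)
        = indicator {0<..} t * emeasure M {x\<in>space M. t < f x}"
      by (simp add: nn_integral_cmult)
  qed
  finally show ?thesis .
qed

context prob_space
begin

lemma nn_integral_VaR_excess:
  fixes Y :: "'a \<Rightarrow> real"
  assumes Y[measurable]: "Y \<in> borel_measurable M" and A[measurable]: "A \<in> events"
    and split: "tail_split M Y A c" and pA: "0 < prob A" "prob A < 1"
  shows "(\<integral>\<^sup>+\<gamma>. ennreal (indicator {0<..<prob A} \<gamma> * (VaR M Y \<gamma> - c)) \<partial>lborel)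
    = (\<integral>\<^sup>+t. indicator {0<..} t * ennreal (prob {\<omega>\<in>space M. c + t < Y \<omega>}) \<partial>lborel)"
proof -
  have "set_borel_measurable borel {0<..<prob A} (VaR M Y)"
    by (rule set_borel_measurable_subset[OF set_borel_measurable_VaR[OF Y]]) (use pA in auto)
  then have [measurable]: "(\<lambda>\<gamma>. indicator {0<..<prob A} \<gamma> * (VaR M Y \<gamma> - c)) \<in> borel_measurable lborel"
    unfolding set_borel_measurable_def by (simp add: right_diff_distrib)
  have "emeasure lborel {\<gamma>\<in>space lborel. t < indicator {0<..<prob A} \<gamma> * (VaR M Y \<gamma> - c)}
      = ennreal (prob {\<omega>\<in>space M. c + t < Y \<omega>})" if "0 < t" for t
  proof -
    have "prob {\<omega>\<in>space M. c + t < Y \<omega>} \<le> prob A"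
      using prob_greater_le_of_tail_split[OF Y A split] \<open>0 < t\<close> by simp
    then have "{\<gamma>\<in>space lborel. t < indicator {0<..<prob A} \<gamma> * (VaR M Y \<gamma> - c)}
        = {0<..<prob {\<omega>\<in>space M. c + t < Y \<omega>}}"
      using less_VaR_iff[OF Y, of _ "c + t"] pA \<open>0 < t\<close>
      by (auto simp: indicator_def algebra_simps)
    then show ?thesis by simp
  qed
  then show ?thesis
    by (subst nn_integral_layer_cake[OF lborel.sigma_finite_measure_axioms], simp)
       (intro nn_integral_cong, auto simp: indicator_def)
qed

lemma nn_integral_tail_excess:
  fixes Y :: "'a \<Rightarrow> real"
  assumes Y[measurable]: "Y \<in> borel_measurable M" and A[measurable]: "A \<in> events"
    and split: "tail_split M Y A c"
  shows "(\<integral>\<^sup>+\<omega>. ennreal (indicator A \<omega> * (Y \<omega> - c)) \<partial>M)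
    = (\<integral>\<^sup>+t. indicator {0<..} t * ennreal (prob {\<omega>\<in>space M. c + t < Y \<omega>}) \<partial>lborel)"
proof -
  have "emeasure M {\<omega>\<in>space M. t < indicator A \<omega> * (Y \<omega> - c)}
      = emeasure M {\<omega>\<in>space M. c + t < Y \<omega>}" if "0 < t" for t
  proof (rule emeasure_eq_AE)
    have "AE \<omega> in M. \<omega> \<notin> A \<longrightarrow> Y \<omega> \<le> c"
      using split by (simp add: tail_split_def)
    then show "AE \<omega> in M. \<omega> \<in> {\<omega>\<in>space M. t < indicator A \<omega> * (Y \<omega> - c)}
        \<longleftrightarrow> \<omega> \<in> {\<omega>\<in>space M. c + t < Y \<omega>}"
      by eventually_elim (use \<open>0 < t\<close> in \<open>auto simp: indicator_def\<close>)
  qed simp_all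
  then show ?thesis
    by (subst nn_integral_layer_cake[OF prob_space_imp_sigma_finite[OF prob_space_axioms]], simp)
       (intro nn_integral_cong, auto simp: indicator_def emeasure_eq_measure)
qed

lemma set_integral_VaR_eq_tail_integral:
  fixes Y :: "'a \<Rightarrow> real"
  assumes Y[measurable]: "Y \<in> borel_measurable M" and "integrable M Y"
    and A[measurable]: "A \<in> events" and split: "tail_split M Y A c"
    and pA: "0 < prob A" "prob A < 1"
  shows "(LINT \<gamma>:{0<..<prob A}|lborel. VaR M Y \<gamma>) = (LINT \<omega>:A|M. Y \<omega>)"
proof -
  let ?f = "\<lambda>\<gamma>. indicator {0<..<prob A} \<gamma> * (VaR M Y \<gamma> - c)"
  let ?g = "\<lambda>\<omega>. indicator A \<omega> * (Y \<omega> - c)"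
  have g_int: "integrable M ?g"
    using integrable_real_mult_indicator[OF A, of "\<lambda>\<omega>. Y \<omega> - c"] assms(2) by (simp add: mult.commute)
  have "AE \<omega> in M. 0 \<le> ?g \<omega>"
    using split unfolding tail_split_def by (auto elim!: eventually_mono simp: indicator_def)
  then have "(\<integral>\<^sup>+\<gamma>. ennreal (?f \<gamma>) \<partial>lborel) = ennreal (integral\<^sup>L M ?g)"
    using nn_integral_VaR_excess[OF Y A split pA] nn_integral_tail_excess[OF Y A split]
      nn_integral_eq_integral[OF g_int] by simp
  moreover have "set_borel_measurable borel {0<..<prob A} (VaR M Y)"
    by (rule set_borel_measurable_subset[OF set_borel_measurable_VaR[OF Y]]) (use pA in auto)
  moreover have "0 \<le> ?f \<gamma>" for \<gamma>
    using le_VaR_of_tail_split[OF Y A split] by (auto simp: indicator_def)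
  moreover have "0 \<le> integral\<^sup>L M ?g"
    using \<open>AE \<omega> in M. 0 \<le> ?g \<omega>\<close> by (rule integral_nonneg_AE)
  ultimately have "has_bochner_integral lborel ?f (integral\<^sup>L M ?g)"
    by (intro has_bochner_integral_nn_integral)
       (auto simp: set_borel_measurable_def right_diff_distrib)
  then have f_int: "integrable lborel ?f" and f_eq: "integral\<^sup>L lborel ?f = integral\<^sup>L M ?g"
    by (auto simp: has_bochner_integral_iff)
  have "(LINT \<gamma>:{0<..<prob A}|lborel. VaR M Y \<gamma>)
      = (\<integral>\<gamma>. ?f \<gamma> + c * indicator {0<..<prob A} \<gamma> \<partial>lborel)"
    unfolding set_lebesgue_integral_def
    by (intro Bochner_Integration.integral_cong) (auto simp: indicator_def)
  also have "\<dots> = integral\<^sup>L M ?g + c * prob A"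
    using f_int f_eq pA by simp
  also have "\<dots> = (\<integral>\<omega>. ?g \<omega> + c * indicator A \<omega> \<partial>M)"
    using g_int by (simp add: emeasure_eq_measure)
  also have "\<dots> = (LINT \<omega>:A|M. Y \<omega>)"
    unfolding set_lebesgue_integral_def
    by (intro Bochner_Integration.integral_cong) (auto simp: indicator_def)
  finally show ?thesis .
qed

lemma ES_eq_tail_integral:
  fixes Y :: "'a \<Rightarrow> real"
  assumes "Y \<in> borel_measurable M" "integrable M Y" "A \<in> events" "tail_split M Y A c"
    and "prob A = \<alpha>" "0 < \<alpha>" "\<alpha> < 1"
  shows "ES M Y \<alpha> = (LINT \<omega>:A|M. Y \<omega>) / \<alpha>"
  using set_integral_VaR_eq_tail_integral[OF assms(1-4)] assms(5-7) by (simp add: ES_def)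

lemma concentrated_tail_split:
  fixes X :: "nat \<Rightarrow> 'a \<Rightarrow> real"
  assumes X: "\<And>i. i < n \<Longrightarrow> X i \<in> borel_measurable M" and "concentrated M \<alpha> n X"
  obtains A where "A \<in> events" "prob A = \<alpha>"
    and "\<And>i. i < n \<Longrightarrow> tail_split M (X i) A (VaR M (X i) \<alpha>)"
    and "tail_split M (\<lambda>\<omega>. \<Sum>i<n. X i \<omega>) A (\<Sum>i<n. VaR M (X i) \<alpha>)"
proof -
  obtain A where "A \<in> events" "prob A = \<alpha>" and tail: "\<And>i. i < n \<Longrightarrow> tail_event M (X i) A"
    using assms(2) unfolding concentrated_def by blast
  moreover have "tail_split M (X i) A (VaR M (X i) \<alpha>)" if "i < n" for i
    using tail_event_tail_split[OF X tail] that \<open>prob A = \<alpha>\<close> by blast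
  ultimately show ?thesis
    using that tail_split_sum[of "{..<n}" M X A "\<lambda>i. VaR M (X i) \<alpha>"] by blast
qed

lemma VaR_sum_le_sum_VaR_concentrated:
  fixes X :: "nat \<Rightarrow> 'a \<Rightarrow> real"
  assumes X: "\<And>i. i < n \<Longrightarrow> X i \<in> borel_measurable M" and "concentrated M \<alpha> n X"
    and "0 < \<alpha>" "\<alpha> < 1"
  shows "VaR M (\<lambda>\<omega>. \<Sum>i<n. X i \<omega>) \<alpha> \<le> (\<Sum>i<n. VaR M (X i) \<alpha>)"
proof -
  obtain A where "A \<in> events" "prob A = \<alpha>"
    and "tail_split M (\<lambda>\<omega>. \<Sum>i<n. X i \<omega>) A (\<Sum>i<n. VaR M (X i) \<alpha>)"
    using concentrated_tail_split[OF assms(1,2)] by blast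
  then show ?thesis
    using VaR_le_of_tail_split[of "\<lambda>\<omega>. \<Sum>i<n. X i \<omega>" A] X assms(3,4) by simp
qed

lemma sum_VaR_le_VaR_sum_concentrated:
  fixes X :: "nat \<Rightarrow> 'a \<Rightarrow> real"
  assumes X: "\<And>i. i < n \<Longrightarrow> X i \<in> borel_measurable M" and "concentrated M \<alpha> n X"
    and "0 < \<alpha>" and "continuous (at_left \<alpha>) (VaR M (\<lambda>\<omega>. \<Sum>i<n. X i \<omega>))"
  shows "(\<Sum>i<n. VaR M (X i) \<alpha>) \<le> VaR M (\<lambda>\<omega>. \<Sum>i<n. X i \<omega>) \<alpha>"
proof -
  let ?S = "\<lambda>\<omega>. \<Sum>i<n. X i \<omega>"
  have S: "?S \<in> borel_measurable M" using X by simp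
  obtain A where A: "A \<in> events" "prob A = \<alpha>"
    and split: "tail_split M ?S A (\<Sum>i<n. VaR M (X i) \<alpha>)"
    using concentrated_tail_split[OF assms(1,2)] by blast
  have "eventually (\<lambda>\<beta>. (\<Sum>i<n. VaR M (X i) \<alpha>) \<le> VaR M ?S \<beta>) (at_left \<alpha>)"
    using eventually_at_left_real[OF \<open>0 < \<alpha>\<close>]
    by eventually_elim (use le_VaR_of_tail_split[OF S A(1) split] A(2) in auto)
  then show ?thesis
    using assms(4) unfolding continuous_within by (intro tendsto_lowerbound) auto
qed

lemma ES_sum_concentrated:
  fixes X :: "nat \<Rightarrow> 'a \<Rightarrow> real"
  assumes X: "\<And>i. i < n \<Longrightarrow> X i \<in> borel_measurable M" "\<And>i. i < n \<Longrightarrow> integrable M (X i)"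
    and "concentrated M \<alpha> n X" and "0 < \<alpha>" "\<alpha> < 1"
  shows "ES M (\<lambda>\<omega>. \<Sum>i<n. X i \<omega>) \<alpha> = (\<Sum>i<n. ES M (X i) \<alpha>)"
proof -
  obtain A where A: "A \<in> events" "prob A = \<alpha>"
    and split: "\<And>i. i < n \<Longrightarrow> tail_split M (X i) A (VaR M (X i) \<alpha>)"
    and split_sum: "tail_split M (\<lambda>\<omega>. \<Sum>i<n. X i \<omega>) A (\<Sum>i<n. VaR M (X i) \<alpha>)"
    using concentrated_tail_split[OF X(1) assms(3)] by blast
  have "ES M (\<lambda>\<omega>. \<Sum>i<n. X i \<omega>) \<alpha> = (LINT \<omega>:A|M. (\<Sum>i<n. X i \<omega>)) / \<alpha>"
    using X A split_sum assms(4,5) by (intro ES_eq_tail_integral) auto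
  also have "(LINT \<omega>:A|M. (\<Sum>i<n. X i \<omega>)) = (\<Sum>i<n. LINT \<omega>:A|M. X i \<omega>)"
    unfolding set_lebesgue_integral_def scaleR_sum_right
    using X(2) A(1) by (intro Bochner_Integration.integral_sum integrable_mult_indicator) auto
  also have "\<dots> / \<alpha> = (\<Sum>i<n. (LINT \<omega>:A|M. X i \<omega>) / \<alpha>)"
    by (simp add: sum_divide_distrib)
  also have "\<dots> = (\<Sum>i<n. ES M (X i) \<alpha>)"
    using X A split assms(4,5) by (intro sum.cong ES_eq_tail_integral[symmetric]) auto
  finally show ?thesis .
qed

end

lemma DQ_le_one:
  assumes "0 < \<alpha>" "\<alpha> < 1"
    and "rho r M (\<lambda>\<omega>. \<Sum>i<n. X i \<omega>) \<alpha> \<le> (\<Sum>i<n. rho r M (X i) \<alpha>)"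
  shows "DQ r M \<alpha> n X \<le> 1"
proof -
  let ?B = "{\<beta> \<in> {0<..<1}. rho r M (\<lambda>\<omega>. \<Sum>i<n. X i \<omega>) \<beta> \<le> (\<Sum>i<n. rho r M (X i) \<alpha>)}"
  have "\<alpha> \<in> ?B" using assms by simp
  moreover have "bdd_below ?B" by (rule bdd_belowI[of _ 0]) auto
  ultimately have "Inf ?B \<le> \<alpha>" by (rule cInf_lower)
  then show ?thesis
    using \<open>\<alpha> \<in> ?B\<close> \<open>0 < \<alpha>\<close> unfolding DQ_def Let_def by auto
qed

lemma DQ_eq_one:
  assumes "0 < \<alpha>" "\<alpha> < 1"
    and "rho r M (\<lambda>\<omega>. \<Sum>i<n. X i \<omega>) \<alpha> = (\<Sum>i<n. rho r M (X i) \<alpha>)"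
    and "\<And>\<beta>. \<beta> \<in> {0<..<\<alpha>} \<Longrightarrow>
      rho r M (\<lambda>\<omega>. \<Sum>i<n. X i \<omega>) \<beta> > rho r M (\<lambda>\<omega>. \<Sum>i<n. X i \<omega>) \<alpha>"
  shows "DQ r M \<alpha> n X = 1"
proof -
  let ?B = "{\<beta> \<in> {0<..<1}. rho r M (\<lambda>\<omega>. \<Sum>i<n. X i \<omega>) \<beta> \<le> (\<Sum>i<n. rho r M (X i) \<alpha>)}"
  have "\<alpha> \<in> ?B" using assms by simp
  moreover have "\<alpha> \<le> \<beta>" if "\<beta> \<in> ?B" for \<beta>
    using that assms(3) assms(4)[of \<beta>] by force
  ultimately have "Inf ?B = \<alpha>"
    by (intro cInf_eq_minimum)
  then show ?thesis
    using \<open>\<alpha> \<in> ?B\<close> \<open>0 < \<alpha>\<close> unfolding DQ_def Let_def by auto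
qed

theorem theorem1:
  fixes M :: "'a measure" and r :: riskmeasure and \<alpha> :: real and n :: nat
    and X :: "nat \<Rightarrow> 'a \<Rightarrow> real"
  assumes "prob_space M" and "atomless M"
    and "n \<ge> 2" and "0 < \<alpha>" and "\<alpha> < 1"
    and "\<forall>i<n. X i \<in> borel_measurable M"
    and "r = ES_rm \<longrightarrow> (\<forall>i<n. integrable M (X i))"
    and "concentrated M \<alpha> n X"
  shows "DQ r M \<alpha> n X \<le> 1 \<and>
         ((continuous (at \<alpha>) (\<lambda>\<beta>. rho r M (\<lambda>\<omega>. \<Sum>i<n. X i \<omega>) \<beta>) \<and>
         (\<forall>\<beta>\<in>{0<..<\<alpha>}. rho r M (\<lambda>\<omega>. \<Sum>i<n. X i \<omega>) \<beta> > rho r M (\<lambda>\<omega>. \<Sum>i<n. X i \<omega>) \<alpha>)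
         \<longrightarrow> DQ r M \<alpha> n X = 1))"
proof -
  interpret prob_space M by (rule assms(1))
  let ?S = "\<lambda>\<omega>. \<Sum>i<n. X i \<omega>"
  have X: "\<And>i. i < n \<Longrightarrow> X i \<in> borel_measurable M" using assms(6) by blast
  have "rho r M ?S \<alpha> \<le> (\<Sum>i<n. rho r M (X i) \<alpha>) \<and>
    (continuous (at \<alpha>) (rho r M ?S) \<longrightarrow> (\<Sum>i<n. rho r M (X i) \<alpha>) \<le> rho r M ?S \<alpha>)"
  proof (cases r)
    case VaR_rm
    then have "rho r M = VaR M" by (simp add: fun_eq_iff)
    then show ?thesis
      using VaR_sum_le_sum_VaR_concentrated[OF X assms(8,4,5)]
        sum_VaR_le_VaR_sum_concentrated[OF X assms(8,4)]
      by (auto simp: continuous_at_split)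
  next
    case ES_rm
    then show ?thesis
      using ES_sum_concentrated[OF X _ assms(8,4,5)] assms(7) by auto
  qed
  then show ?thesis
    using DQ_le_one[OF assms(4,5)] DQ_eq_one[OF assms(4,5)] by (metis order_antisym)
qed

end
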